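(* Let $SO$ be a semi-overlap function and let $I_{SO}(u,v)=\sup\{w\in[0,1]\mid SO(u,w)\le v\}$ be its residual implication, assumed to be a fuzzy implication. Then: (1) $SO(u,v)=\min\{w\in[0,1]\mid I_{SO}(u,w)\ge v\}$ for all $u,v\in[0,1]$. (2) $I_{SO}$ satisfies (NP) if and only if $1$ is the neutral element of $SO$. (3) $I_{SO}$ satisfies (EP) if and only if $SO$ is associative. (4) $I_{SO}$ satisfies (IP) if and only if $SO(u,1)\le u$ for all $u\in[0,1]$. (5) $I_{SO}$ satisfies (LOP) if and only if $SO(u,1)\le u$ for all $u\in[0,1]$. (6) $I_{SO}$ satisfies (ROP) if and only if $SO(u,1)\ge u$ for all $u\in[0,1]$. (7) $I_{SO}$ satisfies (OP) if and only if $1$ is the neutral element of $SO$. (8) $I_{SO}$ satisfies (CB) if and only if $SO(u,v)\le\min\{u,v\}$ for all $u,v\in[0,1]$. (9) If $I_{SO}$ satisfies (CB), then $I_{SO}$ satisfies (SIB). (10) If $SO(u,v)=\min\{u,v\}$ for all $u,v$, then $I_{SO}$ satisfies (IB). (11) If $SO$ has $1$ as neutral element, then $I_{SO}$ satisfies (CB).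
   Context: A semi-overlap function is a function $SO:[0,1]^2\to[0,1]$ such that for all $u,v\in[0,1]$: (S1) $SO(u,v)=SO(v,u)$; (S2) if $uv=0$ then $SO(u,v)=0$; (S3) if $uv=1$ then $SO(u,v)=1$; (S4) $SO$ is increasing in each variable; (S5) $SO$ is left-continuous, meaning that for every $u\in[0,1]$ and every nonempty family $\{v_i\mid i\in I\}\subseteq[0,1]$, $SO(u,\sup_{i\in I}v_i)=\sup_{i\in I}SO(u,v_i)$. $1$ is the neutral element of $SO$ if $SO(1,v)=v$ for all $v$. A fuzzy implication is a function $I:[0,1]^2\to[0,1]$ such that: $u\le v$ implies $I(v,w)\le I(u,w)$; $v\le w$ implies $I(u,v)\le I(u,w)$; $I(0,0)=1$; $I(1,1)=1$; $I(1,0)=0$. For a fuzzy implication $I$ (all quantifiers over $[0,1]$): (NP) $I(1,v)=v$; (LOP) $u\le v\Rightarrow I(u,v)=1$; (ROP) $I(u,v)=1\Rightarrow u\le v$; (OP) $u\le v\Leftrightarrow I(u,v)=1$; (EP) $I(u,I(v,w))=I(v,I(u,w))$; (IP) $I(u,u)=1$; (CB) $v\le I(u,v)$; (SIB) $I(u,v)\le I(u,I(u,v))$; (IB) $I(u,v)=I(u,I(u,v))$. *)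

theory Defs
  imports Main "HOL.Real"
begin


definition semi_overlap :: "(real \<Rightarrow> real \<Rightarrow> real) \<Rightarrow> bool" where
  "semi_overlap SO \<longleftrightarrow>
     (\<forall>u\<in>{0..1}. \<forall>v\<in>{0..1}. SO u v \<in> {0..1}) \<and>
     (\<forall>u\<in>{0..1}. \<forall>v\<in>{0..1}. SO u v = SO v u) \<and>
     (\<forall>u\<in>{0..1}. \<forall>v\<in>{0..1}. u * v = 0 \<longrightarrow> SO u v = 0) \<and>
     (\<forall>u\<in>{0..1}. \<forall>v\<in>{0..1}. u * v = 1 \<longrightarrow> SO u v = 1) \<and>
     (\<forall>u\<in>{0..1}. \<forall>v\<in>{0..1}. \<forall>w\<in>{0..1}. v \<le> w \<longrightarrow> SO u v \<le> SO u w) \<and>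
     (\<forall>u\<in>{0..1}. \<forall>V. V \<noteq> {} \<and> V \<subseteq> {0..1} \<longrightarrow> SO u (Sup V) = Sup (SO u ` V))"

definition neutral_one :: "(real \<Rightarrow> real \<Rightarrow> real) \<Rightarrow> bool" where
  "neutral_one SO \<longleftrightarrow> (\<forall>v\<in>{0..1}. SO 1 v = v)"

definition assoc_on_unit :: "(real \<Rightarrow> real \<Rightarrow> real) \<Rightarrow> bool" where
  "assoc_on_unit SO \<longleftrightarrow> (\<forall>u\<in>{0..1}. \<forall>v\<in>{0..1}. \<forall>w\<in>{0..1}. SO (SO u v) w = SO u (SO v w))"

definition fuzzy_implication :: "(real \<Rightarrow> real \<Rightarrow> real) \<Rightarrow> bool" where
  "fuzzy_implication I \<longleftrightarrow>
     (\<forall>u\<in>{0..1}. \<forall>v\<in>{0..1}. I u v \<in> {0..1}) \<and>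
     (\<forall>u\<in>{0..1}. \<forall>v\<in>{0..1}. \<forall>w\<in>{0..1}. u \<le> v \<longrightarrow> I v w \<le> I u w) \<and>
     (\<forall>u\<in>{0..1}. \<forall>v\<in>{0..1}. \<forall>w\<in>{0..1}. v \<le> w \<longrightarrow> I u v \<le> I u w) \<and>
     I 0 0 = 1 \<and> I 1 1 = 1 \<and> I 1 0 = 0"

definition res_impl :: "(real \<Rightarrow> real \<Rightarrow> real) \<Rightarrow> real \<Rightarrow> real \<Rightarrow> real" where
  "res_impl SO u v = Sup {w \<in> {0..1}. SO u w \<le> v}"

definition NP :: "(real \<Rightarrow> real \<Rightarrow> real) \<Rightarrow> bool" where
  "NP I \<longleftrightarrow> (\<forall>v\<in>{0..1}. I 1 v = v)"
definition LOP :: "(real \<Rightarrow> real \<Rightarrow> real) \<Rightarrow> bool" where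
  "LOP I \<longleftrightarrow> (\<forall>u\<in>{0..1}. \<forall>v\<in>{0..1}. u \<le> v \<longrightarrow> I u v = 1)"
definition ROP :: "(real \<Rightarrow> real \<Rightarrow> real) \<Rightarrow> bool" where
  "ROP I \<longleftrightarrow> (\<forall>u\<in>{0..1}. \<forall>v\<in>{0..1}. I u v = 1 \<longrightarrow> u \<le> v)"
definition OP :: "(real \<Rightarrow> real \<Rightarrow> real) \<Rightarrow> bool" where
  "OP I \<longleftrightarrow> (\<forall>u\<in>{0..1}. \<forall>v\<in>{0..1}. u \<le> v \<longleftrightarrow> I u v = 1)"
definition EP :: "(real \<Rightarrow> real \<Rightarrow> real) \<Rightarrow> bool" where
  "EP I \<longleftrightarrow> (\<forall>u\<in>{0..1}. \<forall>v\<in>{0..1}. \<forall>w\<in>{0..1}. I u (I v w) = I v (I u w))"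
definition IP :: "(real \<Rightarrow> real \<Rightarrow> real) \<Rightarrow> bool" where
  "IP I \<longleftrightarrow> (\<forall>u\<in>{0..1}. I u u = 1)"
definition CB :: "(real \<Rightarrow> real \<Rightarrow> real) \<Rightarrow> bool" where
  "CB I \<longleftrightarrow> (\<forall>u\<in>{0..1}. \<forall>v\<in>{0..1}. v \<le> I u v)"
definition SIB :: "(real \<Rightarrow> real \<Rightarrow> real) \<Rightarrow> bool" where
  "SIB I \<longleftrightarrow> (\<forall>u\<in>{0..1}. \<forall>v\<in>{0..1}. I u v \<le> I u (I u v))"
definition IB :: "(real \<Rightarrow> real \<Rightarrow> real) \<Rightarrow> bool" where
  "IB I \<longleftrightarrow> (\<forall>u\<in>{0..1}. \<forall>v\<in>{0..1}. I u v = I u (I u v))"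

end

theory Submission
  imports Defs
begin

(* Left-continuity makes the supremum defining I_SO(u,v) attained, so SO(u,-) and I_SO(u,-) form
   a Galois connection on [0,1]: SO(u,w) <= v iff w <= I_SO(u,v). Every item then follows by
   transporting a property of SO across this adjunction, comparing elements of [0,1] through
   their lower or upper bounds. Item (9) holds for every fuzzy implication. *)

lemma eq_if_same_lower_bounds:
  fixes a b :: "'a::order"
  assumes "a \<in> A" "b \<in> A" "\<And>z. z \<in> A \<Longrightarrow> z \<le> a \<longleftrightarrow> z \<le> b"
  shows "a = b"
  using assms by (blast intro: order.antisym)

lemma eq_if_same_upper_bounds:
  fixes a b :: "'a::order"
  assumes "a \<in> A" "b \<in> A" "\<And>z. z \<in> A \<Longrightarrow> a \<le> z \<longleftrightarrow> b \<le> z"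
  shows "a = b"
  using assms by (blast intro: order.antisym)

lemma OP_iff_LOP_ROP: "OP I \<longleftrightarrow> LOP I \<and> ROP I"
  unfolding OP_def LOP_def ROP_def by blast

lemma CB_imp_SIB:
  assumes "fuzzy_implication I" "CB I"
  shows "SIB I"
  using assms unfolding fuzzy_implication_def CB_def SIB_def by blast

context
  fixes SO :: "real \<Rightarrow> real \<Rightarrow> real"
  assumes SO: "semi_overlap SO"
begin

lemma semi_overlap_range: "u \<in> {0..1} \<Longrightarrow> v \<in> {0..1} \<Longrightarrow> SO u v \<in> {0..1}"
  and semi_overlap_commute: "u \<in> {0..1} \<Longrightarrow> v \<in> {0..1} \<Longrightarrow> SO u v = SO v u"
  and semi_overlap_zero_right: "u \<in> {0..1} \<Longrightarrow> SO u 0 = 0"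
  and semi_overlap_mono_right:
    "u \<in> {0..1} \<Longrightarrow> v \<in> {0..1} \<Longrightarrow> w \<in> {0..1} \<Longrightarrow> v \<le> w \<Longrightarrow> SO u v \<le> SO u w"
  and semi_overlap_Sup:
    "u \<in> {0..1} \<Longrightarrow> V \<noteq> {} \<Longrightarrow> V \<subseteq> {0..1} \<Longrightarrow> SO u (Sup V) = Sup (SO u ` V)"
  using SO unfolding semi_overlap_def by (meson atLeastAtMost_iff mult_zero_right order_refl zero_le_one)+

lemma semi_overlap_mono_left:
  "u \<in> {0..1} \<Longrightarrow> v \<in> {0..1} \<Longrightarrow> w \<in> {0..1} \<Longrightarrow> u \<le> v \<Longrightarrow> SO u w \<le> SO v w"
  using semi_overlap_mono_right[of w u v] semi_overlap_commute[of u w] semi_overlap_commute[of v w]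
  by simp

lemma res_impl_range:
  assumes u: "u \<in> {0..1}" and v: "v \<in> {0..1}"
  shows "res_impl SO u v \<in> {0..1}"
proof -
  let ?S = "{w \<in> {0..1}. SO u w \<le> v}"
  have "0 \<in> ?S"
    using semi_overlap_zero_right[OF u] v by simp
  moreover have "bdd_above ?S"
    by (rule bdd_aboveI[of _ 1]) auto
  ultimately have "0 \<le> Sup ?S" and "Sup ?S \<le> 1"
    by (auto intro: cSup_upper cSup_least)
  then show ?thesis
    unfolding res_impl_def by simp
qed

lemma res_impl_adjunction:
  assumes u: "u \<in> {0..1}" and v: "v \<in> {0..1}" and w: "w \<in> {0..1}"
  shows "SO u w \<le> v \<longleftrightarrow> w \<le> res_impl SO u v"
proof -
  let ?S = "{w \<in> {0..1}. SO u w \<le> v}"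
  have "0 \<in> ?S"
    using semi_overlap_zero_right[OF u] v by simp
  have "bdd_above ?S"
    by (rule bdd_aboveI[of _ 1]) auto
  show ?thesis
  proof
    assume "SO u w \<le> v"
    with w \<open>bdd_above ?S\<close> show "w \<le> res_impl SO u v"
      unfolding res_impl_def by (auto intro: cSup_upper)
  next
    assume "w \<le> res_impl SO u v"
    then have "SO u w \<le> SO u (Sup ?S)"
      using semi_overlap_mono_right[OF u w] res_impl_range[OF u v]
      unfolding res_impl_def by blast
    also have "\<dots> = Sup (SO u ` ?S)"
      using \<open>0 \<in> ?S\<close> by (intro semi_overlap_Sup[OF u]) blast+
    also have "\<dots> \<le> v"
      using \<open>0 \<in> ?S\<close> by (intro cSup_least) blast+
    finally show "SO u w \<le> v" .
  qed
qed

lemma semi_overlap_least_res_impl: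
  assumes u: "u \<in> {0..1}" and v: "v \<in> {0..1}"
  shows "SO u v \<in> {w \<in> {0..1}. res_impl SO u w \<ge> v}"
    and "\<forall>w\<in>{w \<in> {0..1}. res_impl SO u w \<ge> v}. SO u v \<le> w"
  using res_impl_adjunction[OF u semi_overlap_range[OF u v] v] semi_overlap_range[OF u v]
    res_impl_adjunction[OF u _ v]
  by simp_all

lemma res_impl_eq_one_iff:
  assumes u: "u \<in> {0..1}" and v: "v \<in> {0..1}"
  shows "res_impl SO u v = 1 \<longleftrightarrow> SO u 1 \<le> v"
  using res_impl_adjunction[OF u v, of 1] res_impl_range[OF u v] by auto

lemma res_impl_curry:
  assumes x: "x \<in> {0..1}" and y: "y \<in> {0..1}" and w: "w \<in> {0..1}" and z: "z \<in> {0..1}"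
  shows "z \<le> res_impl SO x (res_impl SO y w) \<longleftrightarrow> SO y (SO x z) \<le> w"
  using res_impl_adjunction[OF x res_impl_range[OF y w] z]
    res_impl_adjunction[OF y w semi_overlap_range[OF x z]] by simp

lemma NP_res_impl_iff: "NP (res_impl SO) \<longleftrightarrow> neutral_one SO"
proof -
  have one: "(1::real) \<in> {0..1}" by simp
  show ?thesis
  proof
    assume NP: "NP (res_impl SO)"
    show "neutral_one SO"
      unfolding neutral_one_def
    proof
      fix v :: real
      assume v: "v \<in> {0..1}"
      have SO_1v: "SO 1 v \<in> {0..1}"
        using semi_overlap_range[OF one v] .
      have "SO 1 v \<le> v"
        using res_impl_adjunction[OF one v v] NP v unfolding NP_def by simp
      moreover have "v \<le> SO 1 v"
        using res_impl_adjunction[OF one SO_1v v] NP SO_1v unfolding NP_def by simp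
      ultimately show "SO 1 v = v" by simp
    qed
  next
    assume neutral: "neutral_one SO"
    show "NP (res_impl SO)"
      unfolding NP_def
    proof
      fix v :: real
      assume v: "v \<in> {0..1}"
      show "res_impl SO 1 v = v"
      proof (rule eq_if_same_lower_bounds[where A = "{0..1}"])
        fix z :: real
        assume z: "z \<in> {0..1}"
        show "z \<le> res_impl SO 1 v \<longleftrightarrow> z \<le> v"
          using res_impl_adjunction[OF one v z] neutral z unfolding neutral_one_def by simp
      qed (use res_impl_range[OF one v] v in simp_all)
    qed
  qed
qed

lemma EP_res_impl_iff_left_commute:
  "EP (res_impl SO) \<longleftrightarrow> (\<forall>a\<in>{0..1}. \<forall>b\<in>{0..1}. \<forall>c\<in>{0..1}. SO a (SO b c) = SO b (SO a c))"
proof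
  assume EP: "EP (res_impl SO)"
  show "\<forall>a\<in>{0..1}. \<forall>b\<in>{0..1}. \<forall>c\<in>{0..1}. SO a (SO b c) = SO b (SO a c)"
  proof (intro ballI)
    fix a b c :: real
    assume a: "a \<in> {0..1}" and b: "b \<in> {0..1}" and c: "c \<in> {0..1}"
    show "SO a (SO b c) = SO b (SO a c)"
    proof (rule eq_if_same_upper_bounds[where A = "{0..1}"])
      fix w :: real
      assume w: "w \<in> {0..1}"
      have "SO a (SO b c) \<le> w \<longleftrightarrow> c \<le> res_impl SO b (res_impl SO a w)"
        using res_impl_curry[OF b a w c] by simp
      also have "\<dots> \<longleftrightarrow> c \<le> res_impl SO a (res_impl SO b w)"
        using EP a b w unfolding EP_def by simp
      also have "\<dots> \<longleftrightarrow> SO b (SO a c) \<le> w"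
        using res_impl_curry[OF a b w c] by simp
      finally show "SO a (SO b c) \<le> w \<longleftrightarrow> SO b (SO a c) \<le> w" .
    qed (use a b c semi_overlap_range in simp_all)
  qed
next
  assume left_commute: "\<forall>a\<in>{0..1}. \<forall>b\<in>{0..1}. \<forall>c\<in>{0..1}. SO a (SO b c) = SO b (SO a c)"
  show "EP (res_impl SO)"
    unfolding EP_def
  proof (intro ballI)
    fix x y w :: real
    assume x: "x \<in> {0..1}" and y: "y \<in> {0..1}" and w: "w \<in> {0..1}"
    show "res_impl SO x (res_impl SO y w) = res_impl SO y (res_impl SO x w)"
    proof (rule eq_if_same_lower_bounds[where A = "{0..1}"])
      fix z :: real
      assume z: "z \<in> {0..1}"
      show "z \<le> res_impl SO x (res_impl SO y w) \<longleftrightarrow> z \<le> res_impl SO y (res_impl SO x w)"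
        using res_impl_curry[OF x y w z] res_impl_curry[OF y x w z] left_commute x y z by simp
    qed (use x y w res_impl_range in simp_all)
  qed
qed

lemma assoc_on_unit_iff_left_commute:
  "assoc_on_unit SO \<longleftrightarrow> (\<forall>a\<in>{0..1}. \<forall>b\<in>{0..1}. \<forall>c\<in>{0..1}. SO a (SO b c) = SO b (SO a c))"
  unfolding assoc_on_unit_def
proof (intro iffI ballI)
  fix a b c :: real
  assume assoc: "\<forall>u\<in>{0..1}. \<forall>v\<in>{0..1}. \<forall>w\<in>{0..1}. SO (SO u v) w = SO u (SO v w)"
    and a: "a \<in> {0..1}" and b: "b \<in> {0..1}" and c: "c \<in> {0..1}"
  have "SO a (SO b c) = SO (SO a b) c"
    using assoc a b c by simp
  also have "\<dots> = SO (SO b a) c"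
    using semi_overlap_commute[OF a b] by simp
  also have "\<dots> = SO b (SO a c)"
    using assoc a b c by simp
  finally show "SO a (SO b c) = SO b (SO a c)" .
next
  fix u v w :: real
  assume left_commute: "\<forall>a\<in>{0..1}. \<forall>b\<in>{0..1}. \<forall>c\<in>{0..1}. SO a (SO b c) = SO b (SO a c)"
    and u: "u \<in> {0..1}" and v: "v \<in> {0..1}" and w: "w \<in> {0..1}"
  have "SO (SO u v) w = SO w (SO u v)"
    using semi_overlap_commute[OF semi_overlap_range[OF u v] w] .
  also have "\<dots> = SO u (SO w v)"
    using left_commute u v w by simp
  also have "\<dots> = SO u (SO v w)"
    using semi_overlap_commute[OF w v] by simp
  finally show "SO (SO u v) w = SO u (SO v w)" .
qed

lemma EP_res_impl_iff: "EP (res_impl SO) \<longleftrightarrow> assoc_on_unit SO"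
  using EP_res_impl_iff_left_commute assoc_on_unit_iff_left_commute by simp

lemma IP_res_impl_iff: "IP (res_impl SO) \<longleftrightarrow> (\<forall>u\<in>{0..1}. SO u 1 \<le> u)"
  unfolding IP_def using res_impl_eq_one_iff by simp

lemma LOP_res_impl_iff: "LOP (res_impl SO) \<longleftrightarrow> (\<forall>u\<in>{0..1}. SO u 1 \<le> u)"
proof
  assume "LOP (res_impl SO)"
  then have "IP (res_impl SO)"
    unfolding LOP_def IP_def by blast
  then show "\<forall>u\<in>{0..1}. SO u 1 \<le> u"
    unfolding IP_res_impl_iff .
next
  assume "\<forall>u\<in>{0..1}. SO u 1 \<le> u"
  then show "LOP (res_impl SO)"
    unfolding LOP_def using res_impl_eq_one_iff by fastforce
qed

lemma ROP_res_impl_iff: "ROP (res_impl SO) \<longleftrightarrow> (\<forall>u\<in>{0..1}. SO u 1 \<ge> u)"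
proof
  assume ROP: "ROP (res_impl SO)"
  show "\<forall>u\<in>{0..1}. SO u 1 \<ge> u"
  proof
    fix u :: real
    assume u: "u \<in> {0..1}"
    have "SO u 1 \<in> {0..1}"
      using semi_overlap_range[OF u] by simp
    with ROP u show "SO u 1 \<ge> u"
      using res_impl_eq_one_iff[OF u] unfolding ROP_def by blast
  qed
next
  assume "\<forall>u\<in>{0..1}. SO u 1 \<ge> u"
  then show "ROP (res_impl SO)"
    unfolding ROP_def using res_impl_eq_one_iff by fastforce
qed

lemma OP_res_impl_iff: "OP (res_impl SO) \<longleftrightarrow> neutral_one SO"
proof -
  have "OP (res_impl SO) \<longleftrightarrow> (\<forall>u\<in>{0..1}. SO u 1 = u)"
    unfolding OP_iff_LOP_ROP LOP_res_impl_iff ROP_res_impl_iff by (auto intro: order.antisym)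
  also have "\<dots> \<longleftrightarrow> neutral_one SO"
    unfolding neutral_one_def using semi_overlap_commute by simp
  finally show ?thesis .
qed

lemma CB_res_impl_iff_le_right: "CB (res_impl SO) \<longleftrightarrow> (\<forall>u\<in>{0..1}. \<forall>v\<in>{0..1}. SO u v \<le> v)"
  unfolding CB_def using res_impl_adjunction by simp

lemma CB_res_impl_iff: "CB (res_impl SO) \<longleftrightarrow> (\<forall>u\<in>{0..1}. \<forall>v\<in>{0..1}. SO u v \<le> min u v)"
  unfolding CB_res_impl_iff_le_right min.bounded_iff
proof (intro iffI ballI conjI)
  fix u v :: real
  assume le_right: "\<forall>u\<in>{0..1}. \<forall>v\<in>{0..1}. SO u v \<le> v"
    and u: "u \<in> {0..1}" and v: "v \<in> {0..1}"
  show "SO u v \<le> v"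
    using le_right u v by simp
  show "SO u v \<le> u"
    using le_right u v semi_overlap_commute[OF u v] by simp
qed simp

lemma IB_res_impl_if_idem:
  assumes idem: "\<And>u z. u \<in> {0..1} \<Longrightarrow> z \<in> {0..1} \<Longrightarrow> SO u (SO u z) = SO u z"
  shows "IB (res_impl SO)"
  unfolding IB_def
proof (intro ballI)
  fix u v :: real
  assume u: "u \<in> {0..1}" and v: "v \<in> {0..1}"
  show "res_impl SO u v = res_impl SO u (res_impl SO u v)"
  proof (rule eq_if_same_lower_bounds[where A = "{0..1}"])
    fix z :: real
    assume z: "z \<in> {0..1}"
    have "z \<le> res_impl SO u (res_impl SO u v) \<longleftrightarrow> SO u (SO u z) \<le> v"
      using res_impl_curry[OF u u v z] .
    also have "\<dots> \<longleftrightarrow> z \<le> res_impl SO u v"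
      using idem[OF u z] res_impl_adjunction[OF u v z] by simp
    finally show "z \<le> res_impl SO u v \<longleftrightarrow> z \<le> res_impl SO u (res_impl SO u v)" by simp
  qed (use res_impl_range u v in auto)
qed

lemma IB_res_impl_if_min:
  assumes "\<forall>u\<in>{0..1}. \<forall>v\<in>{0..1}. SO u v = min u v"
  shows "IB (res_impl SO)"
proof (rule IB_res_impl_if_idem)
  fix u z :: real
  assume u: "u \<in> {0..1}" and z: "z \<in> {0..1}"
  have "min u z \<in> {0..1}"
    using u z by (simp add: min_le_iff_disj)
  then show "SO u (SO u z) = SO u z"
    using assms u z by simp
qed

lemma CB_res_impl_if_neutral_one:
  assumes "neutral_one SO"
  shows "CB (res_impl SO)"
  unfolding CB_res_impl_iff_le_right
  using assms semi_overlap_mono_left[of _ 1] unfolding neutral_one_def by fastforce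

end

theorem proposition3p10:
  fixes SO :: "real \<Rightarrow> real \<Rightarrow> real"
  assumes "semi_overlap SO"
    and "fuzzy_implication (res_impl SO)"
  shows "(\<forall>u\<in>{0..1}. \<forall>v\<in>{0..1}.
            SO u v \<in> {w \<in> {0..1}. res_impl SO u w \<ge> v} \<and>
            (\<forall>w\<in>{w \<in> {0..1}. res_impl SO u w \<ge> v}. SO u v \<le> w))
    \<and> (NP (res_impl SO) \<longleftrightarrow> neutral_one SO)
    \<and> (EP (res_impl SO) \<longleftrightarrow> assoc_on_unit SO)
    \<and> (IP (res_impl SO) \<longleftrightarrow> (\<forall>u\<in>{0..1}. SO u 1 \<le> u))
    \<and> (LOP (res_impl SO) \<longleftrightarrow> (\<forall>u\<in>{0..1}. SO u 1 \<le> u))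
    \<and> (ROP (res_impl SO) \<longleftrightarrow> (\<forall>u\<in>{0..1}. SO u 1 \<ge> u))
    \<and> (OP (res_impl SO) \<longleftrightarrow> neutral_one SO)
    \<and> (CB (res_impl SO) \<longleftrightarrow> (\<forall>u\<in>{0..1}. \<forall>v\<in>{0..1}. SO u v \<le> min u v))
    \<and> (CB (res_impl SO) \<longrightarrow> SIB (res_impl SO))
    \<and> ((\<forall>u\<in>{0..1}. \<forall>v\<in>{0..1}. SO u v = min u v) \<longrightarrow> IB (res_impl SO))
    \<and> (neutral_one SO \<longrightarrow> CB (res_impl SO))"
  using semi_overlap_least_res_impl[OF assms(1)] CB_imp_SIB[OF assms(2)]
    IB_res_impl_if_min[OF assms(1)] CB_res_impl_if_neutral_one[OF assms(1)]
  by (simp add: NP_res_impl_iff[OF assms(1)] EP_res_impl_iff[OF assms(1)]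
      IP_res_impl_iff[OF assms(1)] LOP_res_impl_iff[OF assms(1)] ROP_res_impl_iff[OF assms(1)]
      OP_res_impl_iff[OF assms(1)] CB_res_impl_iff[OF assms(1)])

end
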